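(* Let $\mathcal X$ be a set, let $\kappa:\mathcal X\to\mathbb N\cup\{\infty\}$ and $C_\theta:\mathcal X\to\mathbb R_{\ge 0}$ be maps, and let $\oplus:\mathcal X\times\mathcal X\to\mathcal X$ be a binary operation. For $x_1,\dots,x_m\in\mathcal X$ with $m\ge 3$, write $x_1\oplus\cdots\oplus x_m$ for the right-associated composition $x_1\oplus(x_2\oplus(\cdots\oplus x_m))$. Suppose we are given a notion of independence for pairs $x,y\in\mathcal X$ and of joint independence for finite families in $\mathcal X$. Define \[ \mathcal X_{\mathrm{fin}}:=\{x\in\mathcal X:\kappa(x)<\infty\},\qquad K:=\kappa(\mathcal X_{\mathrm{fin}})\subseteq\mathbb N. \] Assume the following, on $\mathcal X_{\mathrm{fin}}$: (A1) (Monotonicity) For all $x,y\in\mathcal X_{\mathrm{fin}}$, if $\kappa(x)\le\kappa(y)$ then $C_\theta(x)\le C_\theta(y)$. (A2) (Additivity under composition of independent questions) For all independent $x,y\in\mathcal X_{\mathrm{fin}}$, \[ \kappa(x\oplus y)=\kappa(x)+\kappa(y),\qquad C_\theta(x\oplus y)=C_\theta(x)+C_\theta(y). \] (A3) For every $u\in K$ and every $m\in\mathbb N$ ($m\ge 1$), there exist $x_1,\dots,x_m\in\mathcal X_{\mathrm{fin}}$ with $\kappa(x_i)=u$ for all $i$ and $\{x_1,\dots,x_m\}$ jointly independent; consequently $x_1\oplus\cdots\oplus x_m$ is valid and \[ \kappa(x_1\oplus\cdots\oplus x_m)=mu\in K,\qquad C_\theta(x_1\oplus\cdots\oplus x_m)=\sum_{i=1}^m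 C_\theta(x_i). \] Then there exists a constant $\alpha_\theta\ge 0$ such that $C_\theta(x)=\alpha_\theta\,\kappa(x)$ for all $x\in\mathcal X_{\mathrm{fin}}$.
   Context: Interpretation (not needed for the statement): $\mathcal X$ is a space of questions, $\kappa(x)$ is the complexity of question $x$ (minimal number of primitive solution steps), $C_\theta(x)$ is the expected number of reasoning tokens a model $\theta$ generates on $x$, and $x\oplus y$ is the composite question formed by concatenating $x$ and $y$ with a connector prompt. Independence of $x,y$ is the abstract relation under which (A2) applies; joint independence of a finite family is the abstract property used in (A3), whose stated consequence (validity of the composition, additivity of $\kappa$ and of $C_\theta$ over the right-associated composition) is part of the assumption. *)

theory Defs
  imports Main "HOL-Library.Extended_Nat"
begin

fun rcomp :: "('x \<Rightarrow> 'x \<Rightarrow> 'x) \<Rightarrow> 'x list \<Rightarrow> 'x" where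
  "rcomp op [] = undefined"
| "rcomp op [x] = x"
| "rcomp op (x # y # ys) = op x (rcomp op (y # ys))"

definition Xfin :: "('x \<Rightarrow> enat) \<Rightarrow> 'x set" where
  "Xfin \<kappa> = {x. \<kappa> x < \<infinity>}"

definition Kset :: "('x \<Rightarrow> enat) \<Rightarrow> enat set" where
  "Kset \<kappa> = \<kappa> ` Xfin \<kappa>"

end

theory Submission
  imports Defs
begin

text \<open>Only (A1) and (A3) are needed. By monotonicity the cost depends on the complexity alone,
  and replicating a question \<open>m\<close> times multiplies both its complexity and its cost by \<open>m\<close>.
  Comparing \<open>b\<close> copies of a question of complexity \<open>a\<close> with \<open>a\<close> copies of one of
  complexity \<open>b\<close> then gives \<open>b * C x = a * C y\<close>, i.e. the cost is proportional to the
  complexity.\<close>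

locale homogeneous_cost =
  fixes A :: "'a set" and size :: "'a \<Rightarrow> nat" and cost :: "'a \<Rightarrow> real"
  assumes cost_determined_by_size:
      "\<And>x y. x \<in> A \<Longrightarrow> y \<in> A \<Longrightarrow> size x = size y \<Longrightarrow> cost x = cost y"
    and scale:
      "\<And>x m. x \<in> A \<Longrightarrow> m \<ge> 1 \<Longrightarrow> \<exists>y\<in>A. size y = m * size x \<and> cost y = real m * cost x"
begin

lemma cost_eq_0_if_size_eq_0:
  assumes "x \<in> A" "size x = 0"
  shows "cost x = 0"
proof -
  obtain y where "y \<in> A" "size y = 2 * size x" "cost y = 2 * cost x"
    using scale[OF \<open>x \<in> A\<close>, of 2] by auto
  moreover have "cost y = cost x"
    using cost_determined_by_size[OF \<open>y \<in> A\<close> \<open>x \<in> A\<close>] \<open>size y = 2 * size x\<close> \<open>size x = 0\<close>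
    by simp
  ultimately show ?thesis by simp
qed

lemma cost_cross_mult:
  assumes "x \<in> A" "y \<in> A"
  shows "real (size y) * cost x = real (size x) * cost y"
proof (cases "size x = 0 \<or> size y = 0")
  case True
  then show ?thesis using cost_eq_0_if_size_eq_0 assms by auto
next
  case False
  then obtain x' where x': "x' \<in> A" "size x' = size y * size x" "cost x' = real (size y) * cost x"
    using scale[OF \<open>x \<in> A\<close>, of "size y"] by auto
  obtain y' where y': "y' \<in> A" "size y' = size x * size y" "cost y' = real (size x) * cost y"
    using scale[OF \<open>y \<in> A\<close>, of "size x"] False by auto
  have "cost x' = cost y'"
    using cost_determined_by_size[OF x'(1) y'(1)] x'(2) y'(2) by simp
  then show ?thesis using x'(3) y'(3) by simp
qed

lemma cost_proportional_to_size:
  assumes cost_nonneg: "\<And>x. x \<in> A \<Longrightarrow> cost x \<ge> 0"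
  shows "\<exists>\<alpha>. \<alpha> \<ge> 0 \<and> (\<forall>x\<in>A. cost x = \<alpha> * real (size x))"
proof (cases "\<exists>x0\<in>A. size x0 \<noteq> 0")
  case False
  then show ?thesis using cost_eq_0_if_size_eq_0 by auto
next
  case True
  then obtain x0 where x0: "x0 \<in> A" "size x0 \<noteq> 0" by blast
  define \<alpha> where "\<alpha> = cost x0 / real (size x0)"
  have "\<alpha> \<ge> 0" unfolding \<alpha>_def using cost_nonneg[OF x0(1)] by simp
  moreover have "cost x = \<alpha> * real (size x)" if "x \<in> A" for x
    using cost_cross_mult[OF that x0(1)] x0(2) unfolding \<alpha>_def by (simp add: field_simps)
  ultimately show ?thesis by blast
qed

end

lemma sum_list_map_const_on:
  assumes "\<And>z. z \<in> set xs \<Longrightarrow> f z = c"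
  shows "(\<Sum>z\<leftarrow>xs. f z) = of_nat (length xs) * c"
  using assms by (induction xs) (simp_all add: algebra_simps)

theorem proposition1:
  fixes \<kappa> :: "'x \<Rightarrow> enat"
    and C :: "'x \<Rightarrow> real"
    and comp :: "'x \<Rightarrow> 'x \<Rightarrow> 'x"
    and indep :: "'x \<Rightarrow> 'x \<Rightarrow> bool"
    and jindep :: "'x list \<Rightarrow> bool"
  assumes C_nonneg: "\<And>x. C x \<ge> 0"
    and A1: "\<And>x y. x \<in> Xfin \<kappa> \<Longrightarrow> y \<in> Xfin \<kappa> \<Longrightarrow> \<kappa> x \<le> \<kappa> y \<Longrightarrow> C x \<le> C y"
    and A2: "\<And>x y. x \<in> Xfin \<kappa> \<Longrightarrow> y \<in> Xfin \<kappa> \<Longrightarrow> indep x y \<Longrightarrow>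
               \<kappa> (comp x y) = \<kappa> x + \<kappa> y \<and> C (comp x y) = C x + C y"
    and A3: "\<And>u m. u \<in> Kset \<kappa> \<Longrightarrow> m \<ge> 1 \<Longrightarrow>
               \<exists>xs. length xs = m \<and> set xs \<subseteq> Xfin \<kappa> \<and> (\<forall>x\<in>set xs. \<kappa> x = u) \<and> jindep xs
                 \<and> \<kappa> (rcomp comp xs) = of_nat m * u \<and> of_nat m * u \<in> Kset \<kappa>
                 \<and> C (rcomp comp xs) = (\<Sum>x\<leftarrow>xs. C x)"
  shows "\<exists>\<alpha>::real. \<alpha> \<ge> 0 \<and> (\<forall>x\<in>Xfin \<kappa>. C x = \<alpha> * real (the_enat (\<kappa> x)))"
proof -
  have determined: "C x = C y"
    if "x \<in> Xfin \<kappa>" "y \<in> Xfin \<kappa>" "the_enat (\<kappa> x) = the_enat (\<kappa> y)" for x y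
  proof -
    have "\<kappa> x = \<kappa> y" using that by (auto simp: Xfin_def)
    then show ?thesis using A1[OF that(1,2)] A1[OF that(2,1)] by simp
  qed
  have scale: "\<exists>y\<in>Xfin \<kappa>. the_enat (\<kappa> y) = m * the_enat (\<kappa> x) \<and> C y = real m * C x"
    if x: "x \<in> Xfin \<kappa>" and "m \<ge> 1" for x m
  proof -
    obtain xs where xs: "length xs = m" "set xs \<subseteq> Xfin \<kappa>" "\<forall>z\<in>set xs. \<kappa> z = \<kappa> x"
        "\<kappa> (rcomp comp xs) = of_nat m * \<kappa> x" "of_nat m * \<kappa> x \<in> Kset \<kappa>"
        "C (rcomp comp xs) = (\<Sum>z\<leftarrow>xs. C z)"
      using A3[of "\<kappa> x" m] x \<open>m \<ge> 1\<close> by (auto simp: Kset_def)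
    have "C z = C x" if "z \<in> set xs" for z
      using determined[of z x] that xs(2,3) x by auto
    then have "C (rcomp comp xs) = real m * C x"
      using xs(1,6) by (simp add: sum_list_map_const_on)
    moreover have "rcomp comp xs \<in> Xfin \<kappa>"
      using xs(4,5) by (auto simp: Kset_def Xfin_def)
    moreover have "the_enat (\<kappa> (rcomp comp xs)) = m * the_enat (\<kappa> x)"
      using xs(4) x by (auto simp: Xfin_def of_nat_eq_enat)
    ultimately show ?thesis by blast
  qed
  interpret homogeneous_cost "Xfin \<kappa>" "\<lambda>x. the_enat (\<kappa> x)" C
    by unfold_locales (fact determined, fact scale)
  show ?thesis using cost_proportional_to_size C_nonneg by blast
qed

end
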